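(* Let $G=K\rtimes H$ be a Frobenius group with kernel $K$ such that the cardinality of the Frobenius complements is different from $|K|-1$. There is an absolute constant $c>0$ such that for every $0<\varepsilon\le 1/2$ and every $\ell$ with $c\log|K|\log(1/\varepsilon)\le\ell\le|K|$, a uniformly random subset $B\subseteq K$ of size $\ell$ is an $\mathcal{FC}$-strong base (for the action $\circ$) with probability at least $1-\varepsilon$.
   Context: A Frobenius group is a finite group $G$ acting transitively on a finite set such that only the identity has more than one fixed point and some nontrivial element fixes a point; its kernel $K$ (identity plus fixed-point-free elements) is normal, and a Frobenius complement $H$ (a point stabilizer) satisfies $K\cap H=\{1\}$, $G=KH$. The action $\circ$ of $G$ on $K$: for $g=yh$ with $y\in K,h\in H$, $g\circ x=yhxh^{-1}$. $\mathcal{FC}$ is the family of Frobenius complements $\{xHx^{-1}:x\in K\}$ (the stabilizers of the points of $K$). $G_m$ is the stabilizer of $m\in K$. A set $B\subseteq K$ is an $H'$-strong base if $\bigcap_{m\in B}H'G_{g\circ m}=H'$ for every $g\in G$, and an $\mathcal{FC}$-strong base if it is $H'$-strong for every $H'\in\mathcal{FC}$. *)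

theory Defs
  imports "HOL-Algebra.Group_Action" "HOL-Analysis.Analysis"
begin

definition frobenius_action :: "('g, 'm) monoid_scheme \<Rightarrow> 'e set \<Rightarrow> ('g \<Rightarrow> 'e \<Rightarrow> 'e) \<Rightarrow> bool" where
  "frobenius_action G E \<phi> \<longleftrightarrow>
     group G \<and> finite (carrier G) \<and> finite E \<and> E \<noteq> {} \<and>
     transitive_action G E \<phi> \<and>
     (\<forall>g\<in>carrier G. g \<noteq> \<one>\<^bsub>G\<^esub> \<longrightarrow> card (invariants E \<phi> g) \<le> 1) \<and>
     (\<exists>g\<in>carrier G. g \<noteq> \<one>\<^bsub>G\<^esub> \<and> invariants E \<phi> g \<noteq> {})"

definition frobenius_kernel :: "('g, 'm) monoid_scheme \<Rightarrow> 'e set \<Rightarrow> ('g \<Rightarrow> 'e \<Rightarrow> 'e) \<Rightarrow> 'g set" where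
  "frobenius_kernel G E \<phi> = {\<one>\<^bsub>G\<^esub>} \<union> {g \<in> carrier G. invariants E \<phi> g = {}}"

text \<open>The action of G on K: for g = y h with y in K and h in H, g acts by x maps to y h x h^-1.\<close>
definition frob_circ :: "('g, 'm) monoid_scheme \<Rightarrow> 'g set \<Rightarrow> 'g set \<Rightarrow> 'g \<Rightarrow> 'g \<Rightarrow> 'g" where
  "frob_circ G K H g x =
     (let p = (THE p. fst p \<in> K \<and> snd p \<in> H \<and> g = fst p \<otimes>\<^bsub>G\<^esub> snd p)
      in fst p \<otimes>\<^bsub>G\<^esub> snd p \<otimes>\<^bsub>G\<^esub> x \<otimes>\<^bsub>G\<^esub> inv\<^bsub>G\<^esub> (snd p))"

definition frob_stab :: "('g, 'm) monoid_scheme \<Rightarrow> 'g set \<Rightarrow> 'g set \<Rightarrow> 'g \<Rightarrow> 'g set" where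
  "frob_stab G K H m = {g \<in> carrier G. frob_circ G K H g m = m}"

definition frob_FC :: "('g, 'm) monoid_scheme \<Rightarrow> 'g set \<Rightarrow> 'g set \<Rightarrow> 'g set set" where
  "frob_FC G K H = {(\<lambda>h. x \<otimes>\<^bsub>G\<^esub> h \<otimes>\<^bsub>G\<^esub> inv\<^bsub>G\<^esub> x) ` H | x. x \<in> K}"

text \<open>H'-strong base (intersection taken inside carrier G, so the empty intersection is G).\<close>
definition strong_base :: "('g, 'm) monoid_scheme \<Rightarrow> 'g set \<Rightarrow> 'g set \<Rightarrow> 'g set \<Rightarrow> 'g set \<Rightarrow> bool" where
  "strong_base G K H H' B \<longleftrightarrow>
     (\<forall>g\<in>carrier G. carrier G \<inter> (\<Inter>m\<in>B. H' <#>\<^bsub>G\<^esub> frob_stab G K H (frob_circ G K H g m)) = H')"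

definition FC_strong_base :: "('g, 'm) monoid_scheme \<Rightarrow> 'g set \<Rightarrow> 'g set \<Rightarrow> 'g set \<Rightarrow> bool" where
  "FC_strong_base G K H B \<longleftrightarrow> (\<forall>H'\<in>frob_FC G K H. strong_base G K H H' B)"

end

theory Submission imports Defs begin

text \<open>
  A subset B of the kernel K fails to be an FC-strong base
  only if there are a complement H' in FC, an element g of G and an element a of G outside H'
  such that every m in B satisfies a \<in> H' G_(g\<circ>m).  For fixed (H', g, a) the set T of such m
  has at most |H| elements: writing a = h' s with s \<in> G_(g\<circ>m), the map m \<mapsto> h' is injective,
  because the nontrivial element s = h'^-1 a fixes at most one point of K (nontrivial elements
  of a complement do not commute with nontrivial elements of K).  Hence the number of bad
  l-subsets is at most |FC| |G|^2 (|H| choose l) \<le> |K|^5 (|H| choose l).  Conjugation by H acts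
  freely on K - {1}, so |H| divides |K| - 1; since |H| \<noteq> |K| - 1 this gives 2|H| \<le> |K|, hence
  2^l (|H| choose l) \<le> (|K| choose l).  Finally l \<ge> 40 ln|K| ln(1/\<epsilon>) yields |K|^5 \<le> \<epsilon> 2^l.
\<close>

lemma binomial_half_bound:
  assumes "2 * m \<le> (n::nat)"
  shows "2 ^ l * (m choose l) \<le> n choose l"
proof (induction l)
  case 0 then show ?case by simp
next
  case (Suc l)
  have m_step: "Suc l * (m choose Suc l) = (m - l) * (m choose l)"
    using binomial_absorption[of l m] binomial_absorb_comp[of m l] by simp
  have n_step: "Suc l * (n choose Suc l) = (n - l) * (n choose l)"
    using binomial_absorption[of l n] binomial_absorb_comp[of n l] by simp
  have "Suc l * (2 ^ Suc l * (m choose Suc l)) = 2 * 2 ^ l * (Suc l * (m choose Suc l))"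
    by (simp only: power_Suc mult_ac)
  also have "\<dots> = 2 * (m - l) * (2 ^ l * (m choose l))"
    by (simp only: m_step mult_ac)
  also have "\<dots> \<le> 2 * (m - l) * (n choose l)" using Suc.IH by simp
  also have "\<dots> \<le> (n - l) * (n choose l)" using assms by (intro mult_right_mono) linarith+
  also have "\<dots> = Suc l * (n choose Suc l)" using n_step by simp
  finally show ?case by (simp only: mult_le_cancel1)
qed

lemma ln_2_ge_half: "ln (2::real) \<ge> 1/2"
  using ln_add1_ge[of 1] by simp

lemma power_five_le_eps_pow2:
  fixes n l :: nat and \<epsilon> :: real
  assumes n: "n \<ge> 2" and \<epsilon>: "0 < \<epsilon>" "\<epsilon> \<le> 1/2"
    and l: "40 * ln (real n) * ln (1/\<epsilon>) \<le> real l"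
  shows "real n ^ 5 \<le> \<epsilon> * 2 ^ l"
proof -
  define A where "A = ln (real n)"
  define L where "L = ln (1/\<epsilon>)"
  have "ln 2 \<le> A" unfolding A_def using n by simp
  hence A: "A \<ge> 1/2" using ln_2_ge_half by linarith
  have "ln 2 \<le> L" unfolding L_def using \<epsilon> by (simp add: field_simps)
  hence L: "L \<ge> 1/2" using ln_2_ge_half by linarith
  have "A * L \<ge> A / 2" "A * L \<ge> L / 2"
    using mult_left_mono[OF L, of A] mult_right_mono[OF A, of L] A L by auto
  hence AL: "20 * (A * L) \<ge> 5 * A + L" using A by linarith
  have "real l * (1/2) \<le> real l * ln 2" using ln_2_ge_half by (intro mult_left_mono) auto
  moreover have "real l \<ge> 40 * (A * L)" using l unfolding A_def L_def by (simp add: mult.assoc)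
  ultimately have key: "5 * A + L \<le> real l * ln 2" using AL by linarith
  have "ln (real n ^ 5) = 5 * A" unfolding A_def using n by (simp add: ln_realpow)
  also have "\<dots> \<le> ln \<epsilon> + real l * ln 2" using key \<epsilon> unfolding L_def by (simp add: ln_div)
  also have "\<dots> = ln (\<epsilon> * 2 ^ l)" using \<epsilon> by (simp add: ln_mult ln_realpow)
  finally show ?thesis using n \<epsilon> by (simp add: ln_le_cancel_iff)
qed

lemma card_covered_subsets:
  assumes I: "finite I" and T: "\<And>i. i \<in> I \<Longrightarrow> finite (T i) \<and> card (T i) \<le> m"
  shows "card {B. card B = l \<and> (\<exists>i\<in>I. B \<subseteq> T i)} \<le> card I * (m choose l)"
proof -
  have "{B. card B = l \<and> (\<exists>i\<in>I. B \<subseteq> T i)} = (\<Union>i\<in>I. {B. B \<subseteq> T i \<and> card B = l})"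
    by auto
  also have "card \<dots> \<le> (\<Sum>i\<in>I. card {B. B \<subseteq> T i \<and> card B = l})"
    by (rule card_UN_le[OF I])
  also have "\<dots> \<le> (\<Sum>i\<in>I. m choose l)"
    using T by (intro sum_mono) (simp add: n_subsets binomial_right_mono)
  finally show ?thesis by simp
qed

lemma (in group) inv_cancel_left:
  "x \<in> carrier G \<Longrightarrow> y \<in> carrier G \<Longrightarrow> inv x \<otimes> (x \<otimes> y) = y"
  by (simp add: m_assoc[symmetric])

lemma (in group) cancel_inv_left:
  "x \<in> carrier G \<Longrightarrow> y \<in> carrier G \<Longrightarrow> x \<otimes> (inv x \<otimes> y) = y"
  by (simp add: m_assoc[symmetric])

lemma (in group) conj_mult:
  "a \<in> carrier G \<Longrightarrow> b \<in> carrier G \<Longrightarrow> h \<in> carrier G \<Longrightarrow>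
   h \<otimes> (a \<otimes> b) \<otimes> inv h = (h \<otimes> a \<otimes> inv h) \<otimes> (h \<otimes> b \<otimes> inv h)"
  by (simp add: m_assoc inv_cancel_left)

lemma (in group) conj_inv:
  "a \<in> carrier G \<Longrightarrow> h \<in> carrier G \<Longrightarrow> h \<otimes> inv a \<otimes> inv h = inv (h \<otimes> a \<otimes> inv h)"
  by (simp add: inv_mult_group m_assoc)

locale frobenius_group = group G for G (structure) +
  fixes E :: "'e set" and \<phi> and \<omega> and K H
  assumes finite_G: "finite (carrier G)" and finite_E: "finite E"
    and action: "group_action G E \<phi>"
    and \<omega>: "\<omega> \<in> E"
    and H_def: "H = stabilizer G \<phi> \<omega>"
    and K_def: "K = frobenius_kernel G E \<phi>"
    and K_normal: "K \<lhd> G" and K_inter_H: "K \<inter> H = {\<one>}" and K_times_H: "K <#> H = carrier G"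
    and few_fixed_points: "\<forall>g\<in>carrier G. g \<noteq> \<one> \<longrightarrow> card (invariants E \<phi> g) \<le> 1"
begin

sublocale K: subgroup K G
  by (rule normal_imp_subgroup[OF K_normal])

sublocale H: subgroup H G
  unfolding H_def by (rule group_action.stabilizer_subgroup[OF action \<omega>])

lemma finite_K: "finite K"
  using finite_subset[OF K.subset finite_G] .

lemma finite_H: "finite H"
  using finite_subset[OF H.subset finite_G] .

lemma conj_mem_K: "h \<in> carrier G \<Longrightarrow> k \<in> K \<Longrightarrow> h \<otimes> k \<otimes> inv h \<in> K"
  by (rule normal.inv_op_closed2[OF K_normal])

text \<open>Nontrivial elements of H and of K never commute: otherwise h would fix two points
  of E, namely the point fixed by H and its image under k.\<close>
lemma complement_kernel_noncommuting:
  assumes h: "h \<in> H" "h \<noteq> \<one>" and k: "k \<in> K" "k \<noteq> \<one>"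
  shows "h \<otimes> k \<noteq> k \<otimes> h"
proof
  assume comm: "h \<otimes> k = k \<otimes> h"
  have hc: "h \<in> carrier G" and kc: "k \<in> carrier G" using h k by auto
  have "h \<in> stabilizer G \<phi> \<omega>" using h(1) by (simp only: H_def)
  hence h\<omega>: "\<phi> h \<omega> = \<omega>" unfolding stabilizer_def by simp
  have "k \<in> frobenius_kernel G E \<phi>" using k(1) by (simp only: K_def)
  hence k\<omega>: "\<phi> k \<omega> \<noteq> \<omega>"
    using k(2) \<omega> unfolding frobenius_kernel_def invariants_def by auto
  have k\<omega>E: "\<phi> k \<omega> \<in> E" using group_action.element_image[OF action kc \<omega>] by simp
  have "\<phi> h (\<phi> k \<omega>) = \<phi> (h \<otimes> k) \<omega>"
    using group_action.composition_rule[OF action \<omega> hc kc] by simp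
  also have "\<dots> = \<phi> (k \<otimes> h) \<omega>" using comm by simp
  also have "\<dots> = \<phi> k \<omega>"
    using group_action.composition_rule[OF action \<omega> kc hc] h\<omega> by simp
  finally have "{\<omega>, \<phi> k \<omega>} \<subseteq> invariants E \<phi> h"
    using h\<omega> \<omega> k\<omega>E unfolding invariants_def by auto
  hence "card {\<omega>, \<phi> k \<omega>} \<le> card (invariants E \<phi> h)"
    by (intro card_mono) (simp_all add: invariants_def finite_E)
  moreover have "card {\<omega>, \<phi> k \<omega>} = 2" using k\<omega> by simp
  moreover have "card (invariants E \<phi> h) \<le> 1" using few_fixed_points hc h by blast
  ultimately show False by linarith
qed

lemma factorization_exists:
  assumes "g \<in> carrier G" obtains y h where "y \<in> K" "h \<in> H" "g = y \<otimes> h"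
  using assms K_times_H unfolding set_mult_def by blast

lemma factorization_unique:
  assumes "y \<in> K" "h \<in> H" "y' \<in> K" "h' \<in> H" "y \<otimes> h = y' \<otimes> h'"
  shows "y = y' \<and> h = h'"
proof -
  have c: "y \<in> carrier G" "h \<in> carrier G" "y' \<in> carrier G" "h' \<in> carrier G"
    using assms by auto
  have "inv y' \<otimes> y \<otimes> h = h'"
    using inv_solve_left'[of h' y' "y \<otimes> h"] c assms(5) by (simp add: m_assoc)
  hence eq: "inv y' \<otimes> y = h' \<otimes> inv h"
    using inv_solve_right[of "inv y' \<otimes> y" h' h] c by simp
  have "inv y' \<otimes> y \<in> K" "h' \<otimes> inv h \<in> H" using assms by auto
  hence "inv y' \<otimes> y = \<one>" using K_inter_H eq by auto
  hence "y = y'" using inv_solve_left'[of \<one> y' y] c by simp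
  thus ?thesis using assms(5) c by simp
qed

lemma frob_circ_factor:
  assumes "y \<in> K" "h \<in> H"
  shows "frob_circ G K H (y \<otimes> h) x = y \<otimes> h \<otimes> x \<otimes> inv h"
proof -
  have "(THE p. fst p \<in> K \<and> snd p \<in> H \<and> y \<otimes> h = fst p \<otimes> snd p) = (y, h)"
  proof (rule the_equality)
    fix p assume "fst p \<in> K \<and> snd p \<in> H \<and> y \<otimes> h = fst p \<otimes> snd p"
    thus "p = (y, h)" using factorization_unique[of y h "fst p" "snd p"] assms by (simp add: prod_eq_iff)
  qed (use assms in simp)
  thus ?thesis unfolding frob_circ_def Let_def by simp
qed

lemma frob_circ_in_K:
  assumes "g \<in> carrier G" "x \<in> K" shows "frob_circ G K H g x \<in> K"
proof -
  obtain y h where yh: "y \<in> K" "h \<in> H" "g = y \<otimes> h" using factorization_exists assms(1) .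
  have "y \<otimes> (h \<otimes> x \<otimes> inv h) \<in> K" using yh assms conj_mem_K by auto
  thus ?thesis using frob_circ_factor yh assms by (simp add: m_assoc)
qed

lemma frob_circ_inj:
  assumes "g \<in> carrier G" "x \<in> K" "x' \<in> K"
    and "frob_circ G K H g x = frob_circ G K H g x'"
  shows "x = x'"
proof -
  obtain y h where yh: "y \<in> K" "h \<in> H" "g = y \<otimes> h" using factorization_exists assms(1) .
  have "y \<otimes> h \<otimes> x \<otimes> inv h = y \<otimes> h \<otimes> x' \<otimes> inv h" using assms(4) frob_circ_factor yh by simp
  thus ?thesis using yh assms by simp
qed

lemma frob_circ_one: "x \<in> K \<Longrightarrow> frob_circ G K H \<one> x = x"
  using frob_circ_factor[OF K.one_closed H.one_closed, of x] by simp

text \<open>A nontrivial element of G fixes at most one point of K under the action: if y h fixes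
  x and x', then h commutes with the element x^-1 x' of K.\<close>
lemma frob_circ_fixed_point_unique:
  assumes s: "s \<in> carrier G" "s \<noteq> \<one>" and x: "x \<in> K" "x' \<in> K"
    and fixed: "frob_circ G K H s x = x" "frob_circ G K H s x' = x'"
  shows "x = x'"
proof (rule ccontr)
  assume ne: "x \<noteq> x'"
  obtain y h where yh: "y \<in> K" "h \<in> H" "s = y \<otimes> h" using factorization_exists s(1) .
  have c: "y \<in> carrier G" "h \<in> carrier G" "x \<in> carrier G" "x' \<in> carrier G" using yh x by auto
  have conj_x: "h \<otimes> x \<otimes> inv h = inv y \<otimes> x"
    using fixed(1) frob_circ_factor[OF yh(1,2)] inv_solve_left[of "h \<otimes> x \<otimes> inv h" y x] yh c
    by (simp add: m_assoc)
  have conj_x': "h \<otimes> x' \<otimes> inv h = inv y \<otimes> x'"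
    using fixed(2) frob_circ_factor[OF yh(1,2)] inv_solve_left[of "h \<otimes> x' \<otimes> inv h" y x'] yh c
    by (simp add: m_assoc)
  have h1: "h \<noteq> \<one>"
  proof
    assume "h = \<one>"
    hence "inv y \<otimes> x = x" using conj_x c by simp
    hence "y = \<one>" using c by simp
    thus False using s yh \<open>h = \<one>\<close> by simp
  qed
  have "h \<otimes> (inv x \<otimes> x') \<otimes> inv h = (h \<otimes> inv x \<otimes> inv h) \<otimes> (h \<otimes> x' \<otimes> inv h)"
    using c by (simp add: conj_mult)
  also have "\<dots> = inv (inv y \<otimes> x) \<otimes> (inv y \<otimes> x')" using c by (simp add: conj_inv conj_x conj_x')
  also have "\<dots> = inv x \<otimes> x'" using c by (simp add: inv_mult_group m_assoc cancel_inv_left)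
  finally have "h \<otimes> (inv x \<otimes> x') = (inv x \<otimes> x') \<otimes> h"
    using inv_solve_right'[of "inv x \<otimes> x'" "h \<otimes> (inv x \<otimes> x')" h] c by simp
  moreover have "inv x \<otimes> x' \<in> K" using x by simp
  moreover have "inv x \<otimes> x' \<noteq> \<one>" using inv_solve_left'[of \<one> x x'] ne c by auto
  ultimately show False using complement_kernel_noncommuting[OF yh(2) h1] by blast
qed

lemma frob_FC_conjugate:
  assumes "H' \<in> frob_FC G K H"
  obtains x where "x \<in> K" "H' = (\<lambda>h. x \<otimes> h \<otimes> inv x) ` H"
  using assms unfolding frob_FC_def by blast

lemma frob_FC_member:
  assumes "H' \<in> frob_FC G K H"
  shows "H' \<subseteq> carrier G" "finite H'" "card H' \<le> card H"
proof -
  obtain x where x: "x \<in> K" "H' = (\<lambda>h. x \<otimes> h \<otimes> inv x) ` H"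
    using frob_FC_conjugate[OF assms] .
  show "H' \<subseteq> carrier G" using x by auto
  show "finite H'" using x finite_H by simp
  show "card H' \<le> card H" using x card_image_le finite_H by simp
qed

lemma finite_frob_FC: "finite (frob_FC G K H)"
  and card_frob_FC: "card (frob_FC G K H) \<le> card K"
proof -
  have "frob_FC G K H = (\<lambda>x. (\<lambda>h. x \<otimes> h \<otimes> inv x) ` H) ` K" unfolding frob_FC_def by auto
  thus "finite (frob_FC G K H)" "card (frob_FC G K H) \<le> card K"
    using finite_K card_image_le[OF finite_K] by simp_all
qed

text \<open>The points m of K for which a lies in H' G_(g m).  A set B can fail the strong-base
  condition for H' and g only by lying in such a set for some a outside H'.\<close>
definition witness_set :: "'a set \<Rightarrow> 'a \<Rightarrow> 'a \<Rightarrow> 'a set" where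
  "witness_set H' g a = {m \<in> K. a \<in> H' <#> frob_stab G K H (frob_circ G K H g m)}"

text \<open>Writing a = h' s with h' in H' and
  s in the stabilizer of g m, the element h' determines m, because s = h'^-1 a is nontrivial and
  fixes at most one point of K.\<close>
lemma card_witness_set:
  assumes H': "H' \<in> frob_FC G K H" and g: "g \<in> carrier G"
    and a: "a \<in> carrier G" "a \<notin> H'"
  shows "card (witness_set H' g a) \<le> card H"
proof -
  let ?T = "witness_set H' g a"
  let ?stab = "\<lambda>m. frob_stab G K H (frob_circ G K H g m)"
  have H'c: "H' \<subseteq> carrier G" using frob_FC_member[OF H'] by simp
  have "\<exists>h'. h' \<in> H' \<and> inv h' \<otimes> a \<in> ?stab m" if m: "m \<in> ?T" for m
  proof -
    obtain h' s where hs: "h' \<in> H'" "s \<in> ?stab m" "a = h' \<otimes> s"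
      using m unfolding witness_set_def set_mult_def by blast
    have "s \<in> carrier G" using hs(2) unfolding frob_stab_def by simp
    hence "inv h' \<otimes> a = s" using hs H'c inv_cancel_left by auto
    thus ?thesis using hs by blast
  qed
  then obtain f where f: "\<And>m. m \<in> ?T \<Longrightarrow> f m \<in> H' \<and> inv (f m) \<otimes> a \<in> ?stab m"
    by metis
  have "inj_on f ?T"
  proof (rule inj_onI)
    fix m m' assume m: "m \<in> ?T" "m' \<in> ?T" and eq: "f m = f m'"
    let ?s = "inv (f m) \<otimes> a"
    have fc: "f m \<in> carrier G" using f[OF m(1)] H'c by auto
    have s1: "?s \<noteq> \<one>"
      using f[OF m(1)] a fc inv_solve_left'[of \<one> "f m" a] by auto
    have mK: "m \<in> K" "m' \<in> K" using m unfolding witness_set_def by auto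
    have "frob_circ G K H ?s (frob_circ G K H g m) = frob_circ G K H g m"
      "frob_circ G K H ?s (frob_circ G K H g m') = frob_circ G K H g m'"
      using f[OF m(1)] f[OF m(2)] eq unfolding frob_stab_def by auto
    hence "frob_circ G K H g m = frob_circ G K H g m'"
      using frob_circ_fixed_point_unique[OF _ s1 frob_circ_in_K[OF g mK(1)] frob_circ_in_K[OF g mK(2)]]
        fc a by simp
    thus "m = m'" using frob_circ_inj[OF g mK] by simp
  qed
  moreover have "f ` ?T \<subseteq> H'" using f by auto
  ultimately have "card ?T \<le> card H'"
    using card_inj_on_le frob_FC_member(2)[OF H'] by blast
  thus ?thesis using frob_FC_member(3)[OF H'] by linarith
qed

text \<open>A complement H' is always contained in every H' G_(g m), since G_(g m) contains 1;
  so failure of the strong-base property yields an element a outside H' and a witness set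
  containing B.\<close>
lemma not_strong_base_witness:
  assumes B: "B \<subseteq> K" and not_base: "\<not> FC_strong_base G K H B"
  obtains H' g a where "H' \<in> frob_FC G K H" "g \<in> carrier G" "a \<in> carrier G" "a \<notin> H'"
    "B \<subseteq> witness_set H' g a"
proof -
  let ?Q = "\<lambda>H' g. carrier G \<inter> (\<Inter>m\<in>B. H' <#> frob_stab G K H (frob_circ G K H g m))"
  obtain H' g where H': "H' \<in> frob_FC G K H" and g: "g \<in> carrier G" and ne: "?Q H' g \<noteq> H'"
    using not_base unfolding FC_strong_base_def strong_base_def by blast
  have H'c: "H' \<subseteq> carrier G" using frob_FC_member[OF H'] by simp
  have "H' \<subseteq> ?Q H' g"
  proof
    fix h assume h: "h \<in> H'"
    have "h \<in> H' <#> frob_stab G K H (frob_circ G K H g m)" if "m \<in> B" for m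
    proof -
      have "\<one> \<in> frob_stab G K H (frob_circ G K H g m)"
        using frob_circ_one frob_circ_in_K[OF g] B that unfolding frob_stab_def by auto
      moreover have "h = h \<otimes> \<one>" using h H'c by auto
      ultimately show ?thesis using h unfolding set_mult_def by blast
    qed
    thus "h \<in> ?Q H' g" using h H'c by auto
  qed
  then obtain a where "a \<in> ?Q H' g" "a \<notin> H'" using ne by blast
  moreover have "B \<subseteq> witness_set H' g a"
    using \<open>a \<in> ?Q H' g\<close> B unfolding witness_set_def by auto
  ultimately show ?thesis using that H' g by blast
qed

lemma card_non_bases:
  "card {B. B \<subseteq> K \<and> card B = l \<and> \<not> FC_strong_base G K H B}
     \<le> card K * card (carrier G) ^ 2 * (card H choose l)"
proof -
  define I where "I = {(H', g, a). H' \<in> frob_FC G K H \<and> g \<in> carrier G \<and> a \<in> carrier G \<and> a \<notin> H'}"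
  define T where "T i = witness_set (fst i) (fst (snd i)) (snd (snd i))" for i
  have I_sub: "I \<subseteq> frob_FC G K H \<times> carrier G \<times> carrier G" unfolding I_def by auto
  have finite_I: "finite I" using finite_subset[OF I_sub] finite_frob_FC finite_G by simp
  have "card I \<le> card (frob_FC G K H) * (card (carrier G) * card (carrier G))"
    using card_mono[OF _ I_sub] finite_frob_FC finite_G by (simp add: card_cartesian_product)
  hence card_I: "card I \<le> card K * card (carrier G) ^ 2"
    using card_frob_FC by (simp add: power2_eq_square) (meson le_trans mult_le_mono1)
  have T: "finite (T i) \<and> card (T i) \<le> card H" if "i \<in> I" for i
    using that card_witness_set finite_K unfolding I_def T_def witness_set_def by auto
  have "{B. B \<subseteq> K \<and> card B = l \<and> \<not> FC_strong_base G K H B}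
          \<subseteq> {B. card B = l \<and> (\<exists>i\<in>I. B \<subseteq> T i)}"
  proof safe
    fix B assume "B \<subseteq> K" "\<not> FC_strong_base G K H B"
    then obtain H' g a where "H' \<in> frob_FC G K H" "g \<in> carrier G" "a \<in> carrier G" "a \<notin> H'"
      "B \<subseteq> witness_set H' g a" by (rule not_strong_base_witness)
    thus "\<exists>i\<in>I. B \<subseteq> T i" unfolding I_def T_def by (intro bexI[of _ "(H', g, a)"]) auto
  qed
  hence "card {B. B \<subseteq> K \<and> card B = l \<and> \<not> FC_strong_base G K H B}
          \<le> card {B. card B = l \<and> (\<exists>i\<in>I. B \<subseteq> T i)}"
    by (rule card_mono[rotated]) (use finite_I T in \<open>auto intro: finite_subset\<close>)
  also have "\<dots> \<le> card I * (card H choose l)" by (rule card_covered_subsets[OF finite_I T])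
  also have "\<dots> \<le> card K * card (carrier G) ^ 2 * (card H choose l)"
    using card_I by (rule mult_le_mono1)
  finally show ?thesis .
qed

text \<open>Orbits of H acting on K by conjugation.  On K - {1} this action is free, so the orbits
  partition K - {1} into blocks of size |H|; hence |H| divides |K| - 1.\<close>
definition conj_orbit :: "'a \<Rightarrow> 'a set" where
  "conj_orbit k = (\<lambda>h. h \<otimes> k \<otimes> inv h) ` H"

lemma conj_orbit_subset:
  assumes "k \<in> K" "k \<noteq> \<one>" shows "conj_orbit k \<subseteq> K - {\<one>}"
proof
  fix z assume "z \<in> conj_orbit k"
  then obtain h where h: "h \<in> H" "z = h \<otimes> k \<otimes> inv h" unfolding conj_orbit_def by blast
  have c: "h \<in> carrier G" "k \<in> carrier G" using h assms by auto
  have "z \<noteq> \<one>"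
  proof
    assume "z = \<one>"
    hence "h \<otimes> k = h" using inv_solve_right'[of \<one> "h \<otimes> k" h] c h by simp
    thus False using c assms by simp
  qed
  thus "z \<in> K - {\<one>}" using conj_mem_K[OF c(1) assms(1)] h by simp
qed

lemma card_conj_orbit:
  assumes "k \<in> K" "k \<noteq> \<one>" shows "card (conj_orbit k) = card H"
proof -
  have kc: "k \<in> carrier G" using assms by auto
  have "inj_on (\<lambda>h. h \<otimes> k \<otimes> inv h) H"
  proof (rule inj_onI)
    fix h1 h2 assume h: "h1 \<in> H" "h2 \<in> H" and eq: "h1 \<otimes> k \<otimes> inv h1 = h2 \<otimes> k \<otimes> inv h2"
    have c: "h1 \<in> carrier G" "h2 \<in> carrier G" using h by auto
    define d where "d = inv h2 \<otimes> h1"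
    have dH: "d \<in> H" and dc: "d \<in> carrier G" using h c unfolding d_def by auto
    have "d \<otimes> k \<otimes> inv d = inv h2 \<otimes> (h1 \<otimes> k \<otimes> inv h1) \<otimes> h2"
      using c kc unfolding d_def by (simp add: inv_mult_group m_assoc)
    also have "\<dots> = k" using c kc by (simp add: eq m_assoc inv_cancel_left)
    finally have "d \<otimes> k = k \<otimes> d" using inv_solve_right'[of k "d \<otimes> k" d] dc kc by simp
    hence "d = \<one>" using complement_kernel_noncommuting[OF dH _ assms] by blast
    thus "h1 = h2" using inv_solve_left'[of \<one> h2 h1] c unfolding d_def by simp
  qed
  thus ?thesis unfolding conj_orbit_def by (simp add: card_image)
qed

text \<open>Conjugate elements have the same orbit, since H h = H for h in H.\<close>
lemma conj_orbit_conj: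
  assumes h: "h \<in> H" and k: "k \<in> carrier G"
  shows "conj_orbit (h \<otimes> k \<otimes> inv h) = conj_orbit k"
proof -
  have hc: "h \<in> carrier G" using h by auto
  have "conj_orbit (h \<otimes> k \<otimes> inv h) = (\<lambda>x. x \<otimes> k \<otimes> inv x) ` ((\<lambda>h'. h' \<otimes> h) ` H)"
    unfolding conj_orbit_def image_image
    by (intro image_cong refl) (use hc k in \<open>auto simp: inv_mult_group m_assoc\<close>)
  also have "(\<lambda>h'. h' \<otimes> h) ` H = H #> h" unfolding r_coset_def by auto
  also have "\<dots> = H" by (rule H.rcos_const[OF is_group h])
  finally show ?thesis unfolding conj_orbit_def .
qed

lemma card_complement_dvd:
  "card H * card (conj_orbit ` (K - {\<one>})) = card K - 1"
proof -
  let ?C = "conj_orbit ` (K - {\<one>})"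
  have union: "\<Union> ?C = K - {\<one>}"
  proof
    show "\<Union> ?C \<subseteq> K - {\<one>}" using conj_orbit_subset by blast
    have "k \<in> conj_orbit k" if "k \<in> K" for k
      using that unfolding conj_orbit_def by (auto intro!: image_eqI[of _ _ \<one>])
    thus "K - {\<one>} \<subseteq> \<Union> ?C" by blast
  qed
  have "card H * card ?C = card (\<Union> ?C)"
  proof (rule card_partition)
    show "finite ?C" "finite (\<Union> ?C)" using finite_K union by simp_all
    show "card c = card H" if "c \<in> ?C" for c using that card_conj_orbit by auto
    show "c1 \<inter> c2 = {}" if c: "c1 \<in> ?C" "c2 \<in> ?C" "c1 \<noteq> c2" for c1 c2
    proof (rule ccontr)
      assume "c1 \<inter> c2 \<noteq> {}"
      then obtain z where z: "z \<in> c1" "z \<in> c2" by blast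
      obtain k1 k2 where k: "k1 \<in> K" "k2 \<in> K" and c12: "c1 = conj_orbit k1" "c2 = conj_orbit k2"
        using c by blast
      obtain h1 h2 where h: "h1 \<in> H" "h2 \<in> H"
        and z12: "z = h1 \<otimes> k1 \<otimes> inv h1" "z = h2 \<otimes> k2 \<otimes> inv h2"
        using z unfolding c12 conj_orbit_def by blast
      hence z: "h1 \<otimes> k1 \<otimes> inv h1 = h2 \<otimes> k2 \<otimes> inv h2" by simp
      have "c1 = conj_orbit (h1 \<otimes> k1 \<otimes> inv h1)" using conj_orbit_conj h k c12 by auto
      also have "\<dots> = c2" using conj_orbit_conj h k c12 z by auto
      finally show False using c by simp
    qed
  qed
  also have "\<dots> = card K - 1" using union finite_K K.one_closed by simp
  finally show ?thesis .
qed

text \<open>The hypothesis |H| \<noteq> |K| - 1 forces at least two orbits, hence 2|H| \<le> |K|.\<close>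
lemma complement_at_most_half:
  assumes K2: "card K \<ge> 2" and ne: "card H \<noteq> card K - 1"
  shows "2 * card H \<le> card K"
proof -
  let ?n = "card (conj_orbit ` (K - {\<one>}))"
  have d: "card H * ?n = card K - 1" by (rule card_complement_dvd)
  have "?n \<noteq> 0"
  proof
    assume "?n = 0"
    hence "card K - 1 = 0" using d by simp
    thus False using K2 by simp
  qed
  moreover have "?n \<noteq> 1" using d ne by auto
  ultimately have "card H * 2 \<le> card H * ?n" by simp
  thus ?thesis using d by linarith
qed

text \<open>|G| = |K| |H| since G = K H; only the upper bound is needed.\<close>
lemma card_G_le: "card (carrier G) \<le> card K * card H"
proof -
  have "carrier G = (\<lambda>(y, h). y \<otimes> h) ` (K \<times> H)"
    using K_times_H[symmetric] unfolding set_mult_def by auto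
  thus ?thesis
    by (metis card_image_le finite_K finite_H finite_cartesian_product card_cartesian_product)
qed

lemma card_non_bases_power:
  assumes K2: "card K \<ge> 2" and ne: "card H \<noteq> card K - 1"
  shows "card {B. B \<subseteq> K \<and> card B = l \<and> \<not> FC_strong_base G K H B}
           \<le> card K ^ 5 * (card H choose l)"
proof -
  have "card H \<le> card K" using complement_at_most_half[OF K2 ne] by linarith
  hence "card (carrier G) \<le> card K * card K" using card_G_le by (meson le_trans mult_le_mono2)
  hence "card K * card (carrier G) ^ 2 \<le> card K * (card K * card K) ^ 2"
    by (simp add: power_mono)
  also have "\<dots> = card K ^ 5" by (simp add: power2_eq_square eval_nat_numeral)
  finally show ?thesis using card_non_bases[of l] by (meson le_trans mult_le_mono1)
qed

text \<open>If K is trivial then G = H, every complement equals G, and every subset is a strong base.\<close>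
lemma trivial_kernel_strong_base:
  assumes K1: "card K < 2" and B: "B \<subseteq> K" shows "FC_strong_base G K H B"
proof (rule ccontr)
  assume "\<not> FC_strong_base G K H B"
  then obtain H' g a where H': "H' \<in> frob_FC G K H" and a: "a \<in> carrier G" "a \<notin> H'"
    using not_strong_base_witness[OF B] by metis
  have "card K \<le> Suc 0" using K1 by simp
  hence "\<forall>x\<in>K. \<forall>y\<in>K. x = y" using card_le_Suc0_iff_eq[OF finite_K] by simp
  hence "K = {\<one>}" using K.one_closed by blast
  moreover obtain x where "x \<in> K" "H' = (\<lambda>h. x \<otimes> h \<otimes> inv x) ` H"
    using frob_FC_conjugate[OF H'] .
  ultimately have "H' = (\<lambda>h. h) ` H" by (simp add: image_iff)
  hence "H' = H" by simp
  moreover have "carrier G = H" using K_times_H \<open>K = {\<one>}\<close> unfolding set_mult_def by auto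
  ultimately show False using a by simp
qed

lemma card_strong_bases:
  assumes ne: "int (card H) \<noteq> int (card K) - 1" and \<epsilon>: "0 < \<epsilon>" "\<epsilon> \<le> 1/2"
    and l: "40 * ln (real (card K)) * ln (1/\<epsilon>) \<le> real l"
  shows "(1 - \<epsilon>) * real (card K choose l)
           \<le> real (card {B. B \<subseteq> K \<and> card B = l \<and> FC_strong_base G K H B})"
proof -
  define Good where "Good = {B. B \<subseteq> K \<and> card B = l \<and> FC_strong_base G K H B}"
  define Bad where "Bad = {B. B \<subseteq> K \<and> card B = l \<and> \<not> FC_strong_base G K H B}"
  have "Good \<union> Bad = {B. B \<subseteq> K \<and> card B = l}" "Good \<inter> Bad = {}"
    unfolding Good_def Bad_def by auto
  moreover have "finite Good" "finite Bad"
    unfolding Good_def Bad_def using finite_K by (auto intro: finite_subset[of _ "Pow K"])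
  ultimately have split: "card Good + card Bad = card K choose l"
    using card_Un_disjoint n_subsets[OF finite_K] by metis
  have "real (card Bad) \<le> \<epsilon> * real (card K choose l)"
  proof (cases "card K < 2")
    case True
    hence "Bad = {}" unfolding Bad_def using trivial_kernel_strong_base by blast
    thus ?thesis using \<epsilon> by simp
  next
    case False
    hence K2: "card K \<ge> 2" by simp
    have ne': "card H \<noteq> card K - 1" using ne K2 by linarith
    have "real (card Bad) \<le> real (card K) ^ 5 * real (card H choose l)"
      using card_non_bases_power[OF K2 ne', of l] unfolding Bad_def
      by (metis of_nat_le_iff of_nat_mult of_nat_power)
    also have "\<dots> \<le> \<epsilon> * 2 ^ l * real (card H choose l)"
      using power_five_le_eps_pow2[OF K2 \<epsilon> l] by (rule mult_right_mono) simp
    also have "\<dots> = \<epsilon> * real (2 ^ l * (card H choose l))" by simp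
    also have "\<dots> \<le> \<epsilon> * real (card K choose l)"
      using binomial_half_bound[OF complement_at_most_half[OF K2 ne'], of l] \<epsilon>
      by (intro mult_left_mono) (simp_all only: of_nat_le_iff less_imp_le)
    finally show ?thesis .
  qed
  moreover have "real (card Good) = real (card K choose l) - real (card Bad)"
    using split by (simp add: of_nat_add[symmetric] del: of_nat_add)
  ultimately show ?thesis unfolding Good_def[symmetric] by (simp add: algebra_simps)
qed

end

theorem proposition3:
  shows "\<exists>c::real. c > 0 \<and>
    (\<forall>(G::('g, 'm) monoid_scheme) (E::'e set) \<phi> \<omega> K H (\<epsilon>::real) (l::nat).
       frobenius_action G E \<phi> \<and> \<omega> \<in> E \<and>
       H = stabilizer G \<phi> \<omega> \<and> K = frobenius_kernel G E \<phi> \<and>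
       K \<lhd> G \<and> K \<inter> H = {\<one>\<^bsub>G\<^esub>} \<and> K <#>\<^bsub>G\<^esub> H = carrier G \<and>
       int (card H) \<noteq> int (card K) - 1 \<and>
       0 < \<epsilon> \<and> \<epsilon> \<le> 1/2 \<and>
       c * ln (real (card K)) * ln (1 / \<epsilon>) \<le> real l \<and> l \<le> card K
       \<longrightarrow> real (card {B. B \<subseteq> K \<and> card B = l \<and> FC_strong_base G K H B})
             \<ge> (1 - \<epsilon>) * real (card K choose l))"
proof (intro exI[of _ 40] conjI allI impI, simp, elim conjE)
  fix G :: "('g, 'm) monoid_scheme" and E :: "'e set" and \<phi> \<omega> K H and \<epsilon> :: real and l :: nat
  assume frob: "frobenius_action G E \<phi>" and \<omega>: "\<omega> \<in> E"
    and H: "H = stabilizer G \<phi> \<omega>" and K: "K = frobenius_kernel G E \<phi>"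
    and semidirect: "K \<lhd> G" "K \<inter> H = {\<one>\<^bsub>G\<^esub>}" "K <#>\<^bsub>G\<^esub> H = carrier G"
    and ne: "int (card H) \<noteq> int (card K) - 1" and \<epsilon>: "0 < \<epsilon>" "\<epsilon> \<le> 1/2"
    and l: "40 * ln (real (card K)) * ln (1 / \<epsilon>) \<le> real l" and "l \<le> card K"
  from frob have frob_facts: "group G" "finite (carrier G)" "finite E" "group_action G E \<phi>"
    "\<forall>g\<in>carrier G. g \<noteq> \<one>\<^bsub>G\<^esub> \<longrightarrow> card (invariants E \<phi> g) \<le> 1"
    unfolding frobenius_action_def transitive_action_def by blast+
  interpret frobenius_group G E \<phi> \<omega> K H
    by (intro frobenius_group.intro frobenius_group_axioms.intro) fact+
  show "real (card {B. B \<subseteq> K \<and> card B = l \<and> FC_strong_base G K H B})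
          \<ge> (1 - \<epsilon>) * real (card K choose l)"
    using card_strong_bases[OF ne \<epsilon> l] .
qed

end
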